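(* Let $n\ge3$, let $\boldsymbol\ell=(\ell_1,\ldots,\ell_n)$ be positive numbers, let $\mathbf b=(b_1,\ldots,b_n)$ be a vector of offset Kasner exponents, and let $\mu,\tau_0$ be nonzero constants. Then the CMC conformal data set $(g_{\boldsymbol\ell},\mu\,\sigma_{\mathbf b,\boldsymbol\ell},\tau_0)$ on $T^n$ determines (generates exactly one solution of the constraint equations, namely) the Cauchy data of the slice $t=t_0:=1/\tau_0$ of a Kasner spacetime, which is expanding if $\tau_0>0$ and contracting if $\tau_0<0$. Its Kasner exponents are $\mathbf a=s\mathbf b+(\frac1n,\ldots,\frac1n)$, where $s=1$ if $\mu$ and $\tau_0$ have the same sign and $s=-1$ otherwise. The slice $t=t_0$ has metric $c^{q-2}g_{\boldsymbol\ell}$ with $c=|\mu/\tau_0|^{1/q}$, and the slice $t=\mathrm{sgn}(t_0)$ of this spacetime has metric $g_{\bar{\boldsymbol\ell}}$, where $\bar\ell_k=|t_0|^{-a_k}c^{q/2-1}\ell_k$.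
   Context: $q=\frac{2n}{n-2}$, $\kappa=\frac{n-1}{n}$. $T^n=(\mathbb{R}/\mathbb{Z})^n$ with unit coordinates $(s^1,\ldots,s^n)$; $g_{\boldsymbol\ell}=\sum_k\ell_k^2(ds^k)^2$. Offset Kasner exponents: $\mathbf b\in\mathbb{R}^n$ with $\sum_kb_k=0$ and $\sum_kb_k^2=\kappa$. Then $\sigma_{\mathbf b,\boldsymbol\ell}=\sum_kb_k\ell_k^2(ds^k)^2$ is transverse-traceless for $g_{\boldsymbol\ell}$. CMC conformal method: a data set $(g,\sigma,\tau_0)$ ($\sigma$ transverse-traceless, $\tau_0$ constant) generates the solutions $\bar g=\phi^{q-2}g$, $\bar K=\phi^{-2}\sigma+\frac{\tau_0}{n}\bar g$ of the Einstein constraint equations $R_{\bar g}-|\bar K|^2+(\mathrm{tr}\bar K)^2=0$, $\mathrm{div}_{\bar g}\bar K=d\,\mathrm{tr}\bar K$, one for each positive solution $\phi$ of $-2\kappa q\Delta_g\phi+R_g\phi-|\sigma|_g^2\phi^{-q-1}+\kappa\tau_0^2\phi^{q-1}=0$. A Kasner spacetime with exponents $\mathbf a$ ($\sum a_k=1$, $\sum a_k^2=1$) and lengths $\bar{\boldsymbol\ell}$ is $\mathbb{R}_+\times T^n$ (expanding) or $\mathbb{R}_-\times T^n$ (contracting) with metric $-dt^2+\sum_k|t|^{2a_k}\bar\ell_k^2(ds^k)^2$, time-oriented by $\partial_t$. The Cauchy data of a slice $\{t=t_0\}$ is its induced metric and second fundamental form $K(X,Y)=-\langle\partial_t,\nabla_XY\rangle$.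 *)

theory Defs
  imports "HOL-Analysis.Analysis"
begin

text \<open>The torus T^n is (R/Z)^n; functions/tensor fields on T^n are
periodic functions on the coordinate space real^'n (unit coordinates s^1..s^n,
n = CARD('n)). A symmetric 2-tensor field is given by its component matrix
w.r.t. the coordinate coframe ds^k at each point.\<close>

definition q_exp :: "nat \<Rightarrow> real" where "q_exp n = 2 * real n / (real n - 2)"
definition kappa :: "nat \<Rightarrow> real" where "kappa n = (real n - 1) / real n"

definition periodic_fn :: "(real^'n \<Rightarrow> 'b) \<Rightarrow> bool" where
  "periodic_fn f \<longleftrightarrow> (\<forall>k s. f (s + axis k 1) = f s)"

definition pd :: "'n \<Rightarrow> (real^'n \<Rightarrow> real) \<Rightarrow> real^'n \<Rightarrow> real" where
  "pd k f s = deriv (\<lambda>h. f (s + h *\<^sub>R axis k 1)) 0"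

definition has_pd :: "'n \<Rightarrow> (real^'n \<Rightarrow> real) \<Rightarrow> bool" where
  "has_pd k f \<longleftrightarrow> (\<forall>s. (\<lambda>h. f (s + h *\<^sub>R axis k 1)) differentiable (at 0))"

definition C2_fn :: "(real^'n \<Rightarrow> real) \<Rightarrow> bool" where
  "C2_fn f \<longleftrightarrow> continuous_on UNIV f \<and>
     (\<forall>i. has_pd i f \<and> continuous_on UNIV (pd i f) \<and>
       (\<forall>j. has_pd j (pd i f) \<and> continuous_on UNIV (pd j (pd i f))))"

definition ginv :: "(real^'n \<Rightarrow> real^'n^'n) \<Rightarrow> real^'n \<Rightarrow> real^'n^'n" where
  "ginv g s = matrix_inv (g s)"

definition chr2 :: "(real^'n \<Rightarrow> real^'n^'n) \<Rightarrow> 'n \<Rightarrow> 'n \<Rightarrow> 'n \<Rightarrow> real^'n \<Rightarrow> real" where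
  "chr2 g k i j s = (\<Sum>l\<in>UNIV. ginv g s $ k $ l * (1/2) *
      (pd i (\<lambda>x. g x $ j $ l) s + pd j (\<lambda>x. g x $ i $ l) s - pd l (\<lambda>x. g x $ i $ j) s))"

definition laplacian :: "(real^'n \<Rightarrow> real^'n^'n) \<Rightarrow> (real^'n \<Rightarrow> real) \<Rightarrow> real^'n \<Rightarrow> real" where
  "laplacian g f s = (\<Sum>i\<in>UNIV. \<Sum>j\<in>UNIV. ginv g s $ i $ j *
      (pd i (pd j f) s - (\<Sum>k\<in>UNIV. chr2 g k i j s * pd k f s)))"

definition ricci :: "(real^'n \<Rightarrow> real^'n^'n) \<Rightarrow> 'n \<Rightarrow> 'n \<Rightarrow> real^'n \<Rightarrow> real" where
  "ricci g i j s = (\<Sum>k\<in>UNIV. pd k (chr2 g k i j) s - pd j (chr2 g k i k) s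
      + (\<Sum>l\<in>UNIV. chr2 g k k l s * chr2 g l i j s - chr2 g k j l s * chr2 g l i k s))"

definition scalar_curv :: "(real^'n \<Rightarrow> real^'n^'n) \<Rightarrow> real^'n \<Rightarrow> real" where
  "scalar_curv g s = (\<Sum>i\<in>UNIV. \<Sum>j\<in>UNIV. ginv g s $ i $ j * ricci g i j s)"

definition tnormsq :: "(real^'n \<Rightarrow> real^'n^'n) \<Rightarrow> (real^'n \<Rightarrow> real^'n^'n) \<Rightarrow> real^'n \<Rightarrow> real" where
  "tnormsq g \<sigma> s = (\<Sum>i\<in>UNIV. \<Sum>j\<in>UNIV. \<Sum>k\<in>UNIV. \<Sum>l\<in>UNIV.
      ginv g s $ i $ k * ginv g s $ j $ l * \<sigma> s $ i $ j * \<sigma> s $ k $ l)"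

definition lich_solution :: "(real^'n \<Rightarrow> real^'n^'n) \<Rightarrow> (real^'n \<Rightarrow> real^'n^'n) \<Rightarrow> real
      \<Rightarrow> (real^'n \<Rightarrow> real) \<Rightarrow> bool" where
  "lich_solution g \<sigma> \<tau>0 \<phi> \<longleftrightarrow>
     (let n = CARD('n); q = q_exp n; \<kappa> = kappa n in
      periodic_fn \<phi> \<and> C2_fn \<phi> \<and> (\<forall>s. \<phi> s > 0) \<and>
      (\<forall>s. - 2 * \<kappa> * q * laplacian g \<phi> s + scalar_curv g s * \<phi> s
            - tnormsq g \<sigma> s * \<phi> s powr (- q - 1) + \<kappa> * \<tau>0\<^sup>2 * \<phi> s powr (q - 1) = 0))"

definition gen_metric :: "(real^'n \<Rightarrow> real^'n^'n) \<Rightarrow> (real^'n \<Rightarrow> real) \<Rightarrow> real^'n \<Rightarrow> real^'n^'n" where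
  "gen_metric g \<phi> s = (\<phi> s powr (q_exp CARD('n) - 2)) *\<^sub>R g s"

definition gen_sff :: "(real^'n \<Rightarrow> real^'n^'n) \<Rightarrow> (real^'n \<Rightarrow> real^'n^'n) \<Rightarrow> real
      \<Rightarrow> (real^'n \<Rightarrow> real) \<Rightarrow> real^'n \<Rightarrow> real^'n^'n" where
  "gen_sff g \<sigma> \<tau>0 \<phi> s = (\<phi> s powr (-2)) *\<^sub>R \<sigma> s + (\<tau>0 / real CARD('n)) *\<^sub>R gen_metric g \<phi> s"

definition g_len :: "('n \<Rightarrow> real) \<Rightarrow> real^'n \<Rightarrow> real^'n^'n" where
  "g_len l s = (\<chi> i j. if i = j then (l i)\<^sup>2 else 0)"

definition sigma_bl :: "('n \<Rightarrow> real) \<Rightarrow> ('n \<Rightarrow> real) \<Rightarrow> real^'n \<Rightarrow> real^'n^'n" where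
  "sigma_bl b l s = (\<chi> i j. if i = j then b i * (l i)\<^sup>2 else 0)"

definition offset_kasner :: "('n::finite \<Rightarrow> real) \<Rightarrow> bool" where
  "offset_kasner b \<longleftrightarrow> (\<Sum>k\<in>UNIV. b k) = 0 \<and> (\<Sum>k\<in>UNIV. (b k)\<^sup>2) = kappa CARD('n)"

definition kasner_exponents :: "('n::finite \<Rightarrow> real) \<Rightarrow> bool" where
  "kasner_exponents a \<longleftrightarrow> (\<Sum>k\<in>UNIV. a k) = 1 \<and> (\<Sum>k\<in>UNIV. (a k)\<^sup>2) = 1"

text \<open>Spacetime: coordinates (t, s); index None = t, Some k = s^k.
  Coordinate partial derivatives and Christoffel symbols of the first kind,
  christoffel1 G c a b = < d_c , nabla_{d_a} d_b > (Levi-Civita connection).\<close>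
definition st_pd :: "'n option \<Rightarrow> (real \<times> (real^'n) \<Rightarrow> real) \<Rightarrow> real \<times> (real^'n) \<Rightarrow> real" where
  "st_pd i F x = (case i of
      None \<Rightarrow> deriv (\<lambda>\<tau>. F (\<tau>, snd x)) (fst x)
    | Some k \<Rightarrow> deriv (\<lambda>h. F (fst x, snd x + h *\<^sub>R axis k 1)) 0)"

definition christoffel1 :: "('n option \<Rightarrow> 'n option \<Rightarrow> real \<times> (real^'n) \<Rightarrow> real)
      \<Rightarrow> 'n option \<Rightarrow> 'n option \<Rightarrow> 'n option \<Rightarrow> real \<times> (real^'n) \<Rightarrow> real" where
  "christoffel1 G c a b x = (1/2) * (st_pd a (G b c) x + st_pd b (G a c) x - st_pd c (G a b) x)"

definition kasner_G :: "('n \<Rightarrow> real) \<Rightarrow> ('n \<Rightarrow> real) \<Rightarrow> 'n option \<Rightarrow> 'n option \<Rightarrow> real \<times> (real^'n) \<Rightarrow> real" where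
  "kasner_G a lb i j x = (case (i, j) of
      (None, None) \<Rightarrow> -1
    | (Some k, Some m) \<Rightarrow> (if k = m then \<bar>fst x\<bar> powr (2 * a k) * (lb k)\<^sup>2 else 0)
    | _ \<Rightarrow> 0)"

text \<open>Cauchy data of the slice {t = t0}: induced metric and K(X,Y) = - < d_t, nabla_X Y >.\<close>
definition slice_metric :: "('n \<Rightarrow> real) \<Rightarrow> ('n \<Rightarrow> real) \<Rightarrow> real \<Rightarrow> real^'n \<Rightarrow> real^'n^'n" where
  "slice_metric a lb t0 s = (\<chi> k m. kasner_G a lb (Some k) (Some m) (t0, s))"

definition slice_sff :: "('n \<Rightarrow> real) \<Rightarrow> ('n \<Rightarrow> real) \<Rightarrow> real \<Rightarrow> real^'n \<Rightarrow> real^'n^'n" where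
  "slice_sff a lb t0 s = (\<chi> k m. - christoffel1 (kasner_G a lb) None (Some k) (Some m) (t0, s))"

end

theory Submission
  imports Defs
begin

text \<open>For the flat metric the Lichnerowicz equation reads
  2 kappa q Delta phi = kappa tau0^2 phi^(q-1) - kappa mu^2 phi^(-q-1) (using sum b_k^2 = kappa);
  its right-hand side has the sign of phi - c with c = |mu/tau0|^(1/q).  A periodic solution
  attains its maximum and its minimum, where the Laplacian is <= 0 resp. >= 0, so
  max phi <= c <= min phi: the constant c is the only solution.  The generated data
  (c^(q-2) g, c^(-2) mu sigma + (tau0/n) c^(q-2) g) are diagonal, as are the Cauchy data of a
  Kasner slice, whose second fundamental form is K_kk = (a_k/t) g_kk; comparing them at
  t0 = 1/tau0 gives a_k = +-b_k + 1/n.\<close>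

section \<open>Second derivatives at extrema of periodic functions\<close>

lemma DERIV_second_nonpos_at_max:
  fixes f f' :: "real \<Rightarrow> real"
  assumes f': "\<And>x. (f has_real_derivative f' x) (at x)"
    and f'': "(f' has_real_derivative D) (at x0)"
    and max: "\<And>x. f x \<le> f x0"
  shows "D \<le> 0"
proof (rule ccontr)
  assume "\<not> D \<le> 0"
  have "f' x0 = 0"
    using DERIV_local_max[OF f'[of x0], of 1] max by auto
  then obtain d where "d > 0" and incr: "\<And>h. 0 < h \<Longrightarrow> h < d \<Longrightarrow> 0 < f' (x0 + h)"
    using DERIV_pos_inc_right[OF f''] \<open>\<not> D \<le> 0\<close> by auto
  obtain z where "x0 < z" "z < x0 + d/2" and mvt: "f (x0 + d/2) - f x0 = d/2 * f' z"
    using MVT2[of x0 "x0 + d/2" f f'] f' \<open>d > 0\<close> by auto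
  have "0 < f' z"
    using incr[of "z - x0"] \<open>x0 < z\<close> \<open>z < x0 + d/2\<close> by auto
  with \<open>d > 0\<close> have "f x0 < f (x0 + d/2)"
    using mvt mult_pos_pos[of "d/2" "f' z"] by linarith
  with max show False
    by (simp add: not_le[symmetric])
qed

lemma DERIV_second_nonneg_at_min:
  fixes f f' :: "real \<Rightarrow> real"
  assumes "\<And>x. (f has_real_derivative f' x) (at x)"
    and "(f' has_real_derivative D) (at x0)"
    and "\<And>x. f x0 \<le> f x"
  shows "D \<ge> 0"
  using DERIV_second_nonpos_at_max[of "\<lambda>x. - f x" "\<lambda>x. - f' x" "- D" x0] assms
  by (auto intro: DERIV_minus)

lemma DERIV_pd_line:
  assumes "has_pd k f"
  shows "((\<lambda>h. f (s + h *\<^sub>R axis k 1)) has_real_derivative pd k f (s + h *\<^sub>R axis k 1)) (at h)"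
proof -
  have "((\<lambda>x. f ((s + h *\<^sub>R axis k 1) + x *\<^sub>R axis k 1)) has_real_derivative pd k f (s + h *\<^sub>R axis k 1)) (at 0)"
    using assms unfolding has_pd_def pd_def by (simp add: DERIV_deriv_iff_real_differentiable)
  moreover have "(\<lambda>x. f ((s + h *\<^sub>R axis k 1) + x *\<^sub>R axis k 1)) = (\<lambda>x. f (s + (x + h) *\<^sub>R axis k 1))"
    by (simp add: algebra_simps)
  ultimately show ?thesis
    using DERIV_shift[of "\<lambda>h. f (s + h *\<^sub>R axis k 1)" _ 0 h] by simp
qed

lemma pd_pd_nonpos_at_max:
  assumes "C2_fn f" and "\<And>s. f s \<le> f s0"
  shows "pd k (pd k f) s0 \<le> 0"
proof -
  have "has_pd k f" "has_pd k (pd k f)"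
    using assms(1) unfolding C2_fn_def by auto
  then show ?thesis
    using DERIV_second_nonpos_at_max[OF DERIV_pd_line DERIV_pd_line[of k "pd k f" s0 0]] assms(2)
    by simp
qed

lemma pd_pd_nonneg_at_min:
  assumes "C2_fn f" and "\<And>s. f s0 \<le> f s"
  shows "pd k (pd k f) s0 \<ge> 0"
proof -
  have "has_pd k f" "has_pd k (pd k f)"
    using assms(1) unfolding C2_fn_def by auto
  then show ?thesis
    using DERIV_second_nonneg_at_min[OF DERIV_pd_line DERIV_pd_line[of k "pd k f" s0 0]] assms(2)
    by simp
qed

lemma periodic_fn_shift_int:
  assumes "periodic_fn f"
  shows "f (s + of_int m *\<^sub>R axis k 1) = f s"
proof (induction m rule: int_induct[where k = 0])
  case (step1 i)
  then show ?case
    using assms[unfolded periodic_fn_def, rule_format, of "s + of_int i *\<^sub>R axis k 1" k]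
    by (simp add: algebra_simps)
next
  case (step2 i)
  then show ?case
    using assms[unfolded periodic_fn_def, rule_format, of "s + of_int (i - 1) *\<^sub>R axis k 1" k]
    by (simp add: algebra_simps)
qed simp

lemma periodic_fn_shift_int_vector:
  assumes "periodic_fn f"
  shows "f (s + (\<Sum>k\<in>F. of_int (m k) *\<^sub>R axis k 1)) = f s"
proof (induction F rule: infinite_finite_induct)
  case (insert k F)
  then show ?case
    using periodic_fn_shift_int[OF assms, of "s + (\<Sum>k\<in>F. of_int (m k) *\<^sub>R axis k 1)" "m k" k]
    by (simp add: ac_simps)
qed simp_all

lemma periodic_fn_frac:
  fixes f :: "real^'n::finite \<Rightarrow> 'b"
  assumes "periodic_fn f"
  shows "f s = f (\<chi> k. frac (s$k))"
proof -
  have "s = (\<chi> k. frac (s$k)) + (\<Sum>k\<in>UNIV. of_int \<lfloor>s$k\<rfloor> *\<^sub>R axis k 1)"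
    by (simp add: vec_eq_iff frac_def axis_def if_distrib cong: if_cong)
  then show ?thesis
    by (metis periodic_fn_shift_int_vector[OF assms])
qed

lemma periodic_fn_attains_max:
  fixes f :: "real^'n::finite \<Rightarrow> real"
  assumes "periodic_fn f" and "continuous_on UNIV f"
  obtains s0 where "\<And>s. f s \<le> f s0"
proof -
  have "cbox (0::real^'n) 1 \<noteq> {}"
    using mem_box_cart(2)[of 0 0 1] by auto
  then obtain s0 where s0: "\<And>s. s \<in> cbox 0 1 \<Longrightarrow> f s \<le> f s0"
    using continuous_attains_sup[OF compact_cbox _ continuous_on_subset[OF assms(2)]] by blast
  have "(\<chi> k. frac (s$k)) \<in> cbox 0 1" for s :: "real^'n"
    by (simp add: mem_box_cart frac_lt_1 less_imp_le)
  then show ?thesis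
    using that s0 periodic_fn_frac[OF assms(1)] by metis
qed

lemma periodic_fn_attains_min:
  fixes f :: "real^'n::finite \<Rightarrow> real"
  assumes "periodic_fn f" and "continuous_on UNIV f"
  obtains s0 where "\<And>s. f s0 \<le> f s"
proof -
  have "periodic_fn (\<lambda>s. - f s)" "continuous_on UNIV (\<lambda>s. - f s)"
    using assms by (simp_all add: periodic_fn_def continuous_on_minus)
  then show ?thesis
    using that periodic_fn_attains_max[of "\<lambda>s. - f s"] by (metis neg_le_iff_le)
qed

section \<open>Curvature and Laplacian of the flat metric\<close>

lemma pd_const [simp]: "pd k (\<lambda>s. c) = (\<lambda>s. 0)"
  by (simp add: pd_def fun_eq_iff)

lemma if_zero_mult [simp]: "(if P then a else 0) * b = (if P then a * b else (0::'a::mult_zero))"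
  by simp

lemma mult_if_zero [simp]: "a * (if P then b else 0) = (if P then a * b else (0::'a::mult_zero))"
  by simp

lemma matrix_inv_eq:
  fixes A B :: "'a::comm_ring_1^'n^'n"
  assumes "A ** B = mat 1" and "B ** A = mat 1"
  shows "matrix_inv A = B"
proof -
  have inv: "A ** matrix_inv A = mat 1 \<and> matrix_inv A ** A = mat 1"
    unfolding matrix_inv_def by (rule someI[of _ B]) (use assms in blast)
  have "matrix_inv A = (matrix_inv A ** A) ** B"
    using assms by (simp add: matrix_mul_rid matrix_mul_assoc[symmetric])
  also have "\<dots> = B"
    using inv by (simp add: matrix_mul_lid)
  finally show ?thesis .
qed

lemma ginv_g_len:
  assumes "\<And>k. l k \<noteq> 0"
  shows "ginv (g_len l) s = (\<chi> i j. if i = j then 1 / (l i)\<^sup>2 else 0)"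
  unfolding ginv_def
  by (rule matrix_inv_eq)
     (use assms in \<open>simp_all add: vec_eq_iff matrix_matrix_mult_def mat_def g_len_def\<close>)

lemma chr2_g_len: "chr2 (g_len l) k i j = (\<lambda>s. 0)"
  by (simp add: chr2_def g_len_def fun_eq_iff)

lemma scalar_curv_g_len: "scalar_curv (g_len l) s = 0"
  by (simp add: scalar_curv_def ricci_def chr2_g_len)

lemma laplacian_g_len:
  assumes "\<And>k. l k \<noteq> 0"
  shows "laplacian (g_len l) f s = (\<Sum>i\<in>UNIV. pd i (pd i f) s / (l i)\<^sup>2)"
  using assms by (simp add: laplacian_def chr2_g_len ginv_g_len)

lemma tnormsq_g_len_sigma_bl:
  assumes "\<And>k. l k \<noteq> 0"
  shows "tnormsq (g_len l) (\<lambda>s. \<mu> *\<^sub>R sigma_bl b l s) s = \<mu>\<^sup>2 * (\<Sum>k\<in>UNIV. (b k)\<^sup>2)"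
proof -
  let ?G = "ginv (g_len l) s" and ?S = "\<mu> *\<^sub>R sigma_bl b l s"
  have "?G $ i $ k * ?G $ j $ m * ?S $ i $ j * ?S $ k $ m
      = (if k = m then if j = k then if i = j then (\<mu> * b i)\<^sup>2 else 0 else 0 else 0)" for i j k m
    using assms by (simp add: ginv_g_len sigma_bl_def power2_eq_square)
  then show ?thesis
    by (simp add: tnormsq_def sum_distrib_left power_mult_distrib)
qed

section \<open>The Lichnerowicz equation with constant coefficients\<close>

lemma powr_lichnerowicz_sign:
  fixes x c q C :: real
  assumes "x > 0" "c > 0" "q > 0" "C > 0"
  shows "C * x powr (q - 1) - C * c powr (2 * q) * x powr (- q - 1) \<le> 0 \<longleftrightarrow> x \<le> c"
    and "C * x powr (q - 1) - C * c powr (2 * q) * x powr (- q - 1) \<ge> 0 \<longleftrightarrow> c \<le> x"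
proof -
  have mono: "u powr (2 * q) \<le> v powr (2 * q) \<longleftrightarrow> u \<le> v" if "u > 0" "v > 0" for u v
    using that \<open>q > 0\<close> by (smt (verit) powr_less_mono2)
  have "C * x powr (q - 1) - C * c powr (2 * q) * x powr (- q - 1)
      = C * x powr (- q - 1) * (x powr (2 * q) - c powr (2 * q))"
    by (simp add: algebra_simps powr_add[symmetric])
  moreover have "C * x powr (- q - 1) > 0"
    using assms by simp
  ultimately show "C * x powr (q - 1) - C * c powr (2 * q) * x powr (- q - 1) \<le> 0 \<longleftrightarrow> x \<le> c"
    and "C * x powr (q - 1) - C * c powr (2 * q) * x powr (- q - 1) \<ge> 0 \<longleftrightarrow> c \<le> x"
    using mono[of x c] mono[of c x] assms by (simp_all add: mult_le_0_iff zero_le_mult_iff)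
qed

lemma flat_lichnerowicz_iff:
  fixes l :: "'n::finite \<Rightarrow> real" and \<phi> :: "real^'n \<Rightarrow> real"
  assumes "A > 0" "C > 0" "q > 0" "c > 0"
  shows "periodic_fn \<phi> \<and> C2_fn \<phi> \<and> (\<forall>s. \<phi> s > 0) \<and>
           (\<forall>s. A * (\<Sum>i\<in>UNIV. pd i (pd i \<phi>) s / (l i)\<^sup>2)
                 = C * \<phi> s powr (q - 1) - C * c powr (2 * q) * \<phi> s powr (- q - 1))
         \<longleftrightarrow> \<phi> = (\<lambda>s. c)"
    (is "?sol \<longleftrightarrow> _")
proof
  assume ?sol
  then have per: "periodic_fn \<phi>" and C2: "C2_fn \<phi>" and pos: "\<And>s. \<phi> s > 0"
    and eq: "\<And>s. A * (\<Sum>i\<in>UNIV. pd i (pd i \<phi>) s / (l i)\<^sup>2)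
                 = C * \<phi> s powr (q - 1) - C * c powr (2 * q) * \<phi> s powr (- q - 1)"
    by auto
  have cont: "continuous_on UNIV \<phi>"
    using C2 by (simp add: C2_fn_def)
  obtain s1 where s1: "\<And>s. \<phi> s \<le> \<phi> s1"
    using periodic_fn_attains_max[OF per cont] by blast
  obtain s2 where s2: "\<And>s. \<phi> s2 \<le> \<phi> s"
    using periodic_fn_attains_min[OF per cont] by blast
  have "A * (\<Sum>i\<in>UNIV. pd i (pd i \<phi>) s1 / (l i)\<^sup>2) \<le> 0"
    using \<open>A > 0\<close> pd_pd_nonpos_at_max[OF C2 s1]
    by (simp add: mult_nonneg_nonpos sum_nonpos divide_nonpos_nonneg)
  then have "\<phi> s1 \<le> c"
    using eq[of s1] powr_lichnerowicz_sign(1)[OF pos assms(4,3,2)] by simp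
  moreover have "A * (\<Sum>i\<in>UNIV. pd i (pd i \<phi>) s2 / (l i)\<^sup>2) \<ge> 0"
    using \<open>A > 0\<close> pd_pd_nonneg_at_min[OF C2 s2] by (simp add: sum_nonneg)
  then have "c \<le> \<phi> s2"
    using eq[of s2] powr_lichnerowicz_sign(2)[OF pos assms(4,3,2)] by simp
  ultimately show "\<phi> = (\<lambda>s. c)"
    using s1 s2 by (fastforce intro: order_antisym order_trans)
next
  assume "\<phi> = (\<lambda>s. c)"
  moreover have "c powr (q - 1) = c powr (2 * q) * c powr (- q - 1)"
    by (simp add: powr_add[symmetric])
  ultimately show ?sol
    using \<open>c > 0\<close> by (simp add: periodic_fn_def C2_fn_def has_pd_def)
qed

lemma lich_solution_sigma_bl_iff:
  fixes l b :: "'n::finite \<Rightarrow> real"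
  assumes "CARD('n) \<ge> 3" and "\<And>k. l k \<noteq> 0" and "offset_kasner b"
    and "\<mu> \<noteq> 0" and "\<tau>0 \<noteq> 0"
  shows "lich_solution (g_len l) (\<lambda>s. \<mu> *\<^sub>R sigma_bl b l s) \<tau>0 \<phi>
           \<longleftrightarrow> \<phi> = (\<lambda>s. \<bar>\<mu> / \<tau>0\<bar> powr (1 / q_exp CARD('n)))"
proof -
  define q where "q = q_exp CARD('n)"
  define \<kappa> where "\<kappa> = kappa CARD('n)"
  define c where "c = \<bar>\<mu> / \<tau>0\<bar> powr (1 / q)"
  have "q > 0" "\<kappa> > 0"
    using assms(1) by (simp_all add: q_def q_exp_def \<kappa>_def kappa_def)
  have "c > 0"
    using assms(4,5) by (simp add: c_def)
  have "c powr (2 * q) = (\<bar>\<mu> / \<tau>0\<bar> powr (q * (1 / q))) powr 2"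
    by (simp add: c_def powr_powr mult_ac)
  then have "\<tau>0\<^sup>2 * c powr (2 * q) = \<mu>\<^sup>2"
    using \<open>q > 0\<close> assms(4,5) by (simp add: power_divide)
  then have "- 2 * \<kappa> * q * L - \<mu>\<^sup>2 * \<kappa> * x + \<kappa> * \<tau>0\<^sup>2 * y = 0
      \<longleftrightarrow> 2 * \<kappa> * q * L = \<kappa> * \<tau>0\<^sup>2 * y - \<kappa> * \<tau>0\<^sup>2 * c powr (2 * q) * x" for L x y
    by (auto simp: algebra_simps)
  then have "lich_solution (g_len l) (\<lambda>s. \<mu> *\<^sub>R sigma_bl b l s) \<tau>0 \<phi> \<longleftrightarrow>
      periodic_fn \<phi> \<and> C2_fn \<phi> \<and> (\<forall>s. \<phi> s > 0) \<and>
      (\<forall>s. 2 * \<kappa> * q * (\<Sum>i\<in>UNIV. pd i (pd i \<phi>) s / (l i)\<^sup>2)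
            = \<kappa> * \<tau>0\<^sup>2 * \<phi> s powr (q - 1) - \<kappa> * \<tau>0\<^sup>2 * c powr (2 * q) * \<phi> s powr (- q - 1))"
    using assms(2,3)
    by (simp add: lich_solution_def Let_def scalar_curv_g_len laplacian_g_len tnormsq_g_len_sigma_bl
                  offset_kasner_def q_def \<kappa>_def)
  also have "\<dots> \<longleftrightarrow> \<phi> = (\<lambda>s. c)"
    using \<open>q > 0\<close> \<open>\<kappa> > 0\<close> \<open>c > 0\<close> assms(5) by (intro flat_lichnerowicz_iff) auto
  finally show ?thesis
    by (simp add: c_def q_def)
qed

section \<open>Cauchy data of Kasner slices\<close>

lemma abs_powr_eq_square_powr:
  fixes t p :: real
  shows "\<bar>t\<bar> powr p = (t\<^sup>2) powr (p / 2)"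
proof (cases "t = 0")
  case False
  then have "(t\<^sup>2) powr (p / 2) = (\<bar>t\<bar> powr 2) powr (p / 2)"
    by simp
  then show ?thesis
    unfolding powr_powr by simp
qed simp

lemma DERIV_abs_powr:
  fixes t p :: real
  assumes "t \<noteq> 0"
  shows "((\<lambda>\<tau>. \<bar>\<tau>\<bar> powr p) has_real_derivative p * \<bar>t\<bar> powr p / t) (at t)"
proof -
  have "((\<lambda>\<tau>. (\<tau>\<^sup>2) powr (p / 2)) has_real_derivative p / 2 * (t\<^sup>2) powr (p / 2 - 1) * (2 * t)) (at t)"
    using assms by (intro DERIV_fun_powr[simplified] derivative_eq_intros) auto
  moreover have "(t\<^sup>2) powr (p / 2 - 1) = \<bar>t\<bar> powr p / t\<^sup>2"
    using assms by (simp add: abs_powr_eq_square_powr powr_diff)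
  ultimately show ?thesis
    using assms by (simp add: abs_powr_eq_square_powr power2_eq_square)
qed

lemma slice_metric_eq_g_len: "slice_metric a lb t = g_len (\<lambda>k. \<bar>t\<bar> powr a k * lb k)"
  by (simp add: fun_eq_iff vec_eq_iff slice_metric_def kasner_G_def g_len_def
                power_mult_distrib power2_eq_square powr_add[symmetric])

lemma slice_metric_sgn:
  assumes "t \<noteq> 0"
  shows "slice_metric a lb (sgn t) = g_len lb"
  using assms by (simp add: slice_metric_eq_g_len abs_sgn)

lemma g_len_scale: "g_len (\<lambda>k. r * l k) = (\<lambda>s. r\<^sup>2 *\<^sub>R g_len l s)"
  by (simp add: fun_eq_iff vec_eq_iff g_len_def power_mult_distrib)

lemma slice_sff_eq:
  assumes "t \<noteq> 0"
  shows "slice_sff a lb t s $ k $ m = a k / t * slice_metric a lb t s $ k $ m"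
proof -
  have "((\<lambda>\<tau>. \<bar>\<tau>\<bar> powr (2 * a k) * (lb k)\<^sup>2) has_real_derivative
          2 * a k * \<bar>t\<bar> powr (2 * a k) / t * (lb k)\<^sup>2) (at t)"
    by (rule DERIV_cmult_right[OF DERIV_abs_powr[OF assms]])
  then have "deriv (\<lambda>\<tau>. \<bar>\<tau>\<bar> powr (2 * a k) * (lb k)\<^sup>2) t = 2 * a k * \<bar>t\<bar> powr (2 * a k) / t * (lb k)\<^sup>2"
    by (rule DERIV_imp_deriv)
  then show ?thesis
    by (cases "k = m") (simp_all add: slice_sff_def slice_metric_def christoffel1_def st_pd_def kasner_G_def)
qed

lemma kasner_exponents_offset:
  fixes b :: "'n::finite \<Rightarrow> real"
  assumes "offset_kasner b" and "sg\<^sup>2 = 1"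
  shows "kasner_exponents (\<lambda>k. sg * b k + 1 / real CARD('n))"
proof -
  let ?n = "real CARD('n)"
  have b: "(\<Sum>k\<in>UNIV. b k) = 0" "(\<Sum>k\<in>UNIV. (b k)\<^sup>2) = (?n - 1) / ?n"
    using assms(1) by (simp_all add: offset_kasner_def kappa_def)
  have "(\<Sum>k\<in>UNIV. sg * b k + 1 / ?n) = sg * (\<Sum>k\<in>UNIV. b k) + ?n / ?n"
    by (simp add: sum.distrib sum_distrib_left)
  also have "\<dots> = 1"
    using b by simp
  finally have sum: "(\<Sum>k\<in>UNIV. sg * b k + 1 / ?n) = 1" .
  have "(\<Sum>k\<in>UNIV. (sg * b k + 1 / ?n)\<^sup>2)
      = (\<Sum>k\<in>UNIV. sg\<^sup>2 * (b k)\<^sup>2 + 2 * sg / ?n * b k + 1 / ?n\<^sup>2)"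
    by (simp add: power2_eq_square algebra_simps)
  also have "\<dots> = sg\<^sup>2 * (\<Sum>k\<in>UNIV. (b k)\<^sup>2) + 2 * sg / ?n * (\<Sum>k\<in>UNIV. b k) + ?n / ?n\<^sup>2"
    by (simp add: sum.distrib sum_distrib_left)
  also have "\<dots> = 1"
    using b assms(2) by (simp add: power2_eq_square field_simps)
  finally show ?thesis
    using sum by (simp add: kasner_exponents_def)
qed

lemma gen_sff_const_eq_slice_sff:
  fixes l b a lb :: "'n::finite \<Rightarrow> real"
  assumes "\<tau>0 \<noteq> 0"
    and "slice_metric a lb (1 / \<tau>0) = (\<lambda>s. c powr (q_exp CARD('n) - 2) *\<^sub>R g_len l s)"
    and "a = (\<lambda>k. sg * b k + 1 / real CARD('n))"
    and "\<mu> * c powr (- 2) = sg * \<tau>0 * c powr (q_exp CARD('n) - 2)"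
  shows "gen_sff (g_len l) (\<lambda>s. \<mu> *\<^sub>R sigma_bl b l s) \<tau>0 (\<lambda>s. c) = slice_sff a lb (1 / \<tau>0)"
proof (intro ext)
  fix s
  have "slice_sff a lb (1 / \<tau>0) s $ k $ m = a k * \<tau>0 * (c powr (q_exp CARD('n) - 2) *\<^sub>R g_len l s) $ k $ m"
    for k m
    using assms(1,2) by (simp add: slice_sff_eq)
  then show "gen_sff (g_len l) (\<lambda>s. \<mu> *\<^sub>R sigma_bl b l s) \<tau>0 (\<lambda>s. c) s = slice_sff a lb (1 / \<tau>0) s"
    using assms(4)
    by (simp add: vec_eq_iff gen_sff_def gen_metric_def sigma_bl_def g_len_def assms(3) algebra_simps)
qed

theorem proposition4p1:
  fixes l b :: "'n::finite \<Rightarrow> real" and \<mu> \<tau>0 :: real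
  assumes "CARD('n) \<ge> 3"
    and "\<forall>k. l k > 0"
    and "offset_kasner b"
    and "\<mu> \<noteq> 0" and "\<tau>0 \<noteq> 0"
  shows "let n = CARD('n); q = q_exp n; t0 = 1 / \<tau>0;
             sg = (if (\<mu> > 0 \<longleftrightarrow> \<tau>0 > 0) then 1 else -1 :: real);
             a = (\<lambda>k. sg * b k + 1 / real n);
             c = \<bar>\<mu> / \<tau>0\<bar> powr (1 / q);
             lb = (\<lambda>k. \<bar>t0\<bar> powr (- a k) * c powr (q / 2 - 1) * l k);
             g = g_len l; \<sigma> = (\<lambda>s. \<mu> *\<^sub>R sigma_bl b l s)
         in kasner_exponents a \<and> (\<forall>k. lb k > 0)
          \<and> (\<tau>0 > 0 \<longrightarrow> t0 > 0) \<and> (\<tau>0 < 0 \<longrightarrow> t0 < 0)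
          \<and> (\<exists>!\<phi>. lich_solution g \<sigma> \<tau>0 \<phi>)
          \<and> (\<forall>\<phi>. lich_solution g \<sigma> \<tau>0 \<phi> \<longrightarrow>
                 gen_metric g \<phi> = slice_metric a lb t0 \<and>
                 gen_sff g \<sigma> \<tau>0 \<phi> = slice_sff a lb t0)
          \<and> slice_metric a lb t0 = (\<lambda>s. (c powr (q - 2)) *\<^sub>R g s)
          \<and> slice_metric a lb (sgn t0) = g_len lb"
proof -
  define n where "n = CARD('n)"
  define q where "q = q_exp n"
  define t0 where "t0 = 1 / \<tau>0"
  define sg :: real where "sg = (if \<mu> > 0 \<longleftrightarrow> \<tau>0 > 0 then 1 else -1)"
  define a where "a = (\<lambda>k. sg * b k + 1 / real n)"
  define c where "c = \<bar>\<mu> / \<tau>0\<bar> powr (1 / q)"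
  define lb where "lb = (\<lambda>k. \<bar>t0\<bar> powr (- a k) * c powr (q / 2 - 1) * l k)"
  have "q > 0" "c > 0" "t0 \<noteq> 0"
    using assms(1,4,5) by (simp_all add: q_def n_def q_exp_def c_def t0_def)
  have lich: "lich_solution (g_len l) (\<lambda>s. \<mu> *\<^sub>R sigma_bl b l s) \<tau>0 \<phi> \<longleftrightarrow> \<phi> = (\<lambda>s. c)" for \<phi>
    using lich_solution_sigma_bl_iff[OF assms(1) _ assms(3-5)] assms(2)
    by (simp add: c_def q_def n_def less_imp_neq[symmetric])
  have "\<bar>t0\<bar> powr a k * lb k = c powr (q / 2 - 1) * l k" for k
    using \<open>t0 \<noteq> 0\<close> by (simp add: lb_def powr_minus)
  then have slice: "slice_metric a lb t0 = (\<lambda>s. c powr (q - 2) *\<^sub>R g_len l s)"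
    by (simp add: slice_metric_eq_g_len g_len_scale power2_eq_square powr_add[symmetric])
  have "c powr q = \<bar>\<mu> / \<tau>0\<bar>"
    using \<open>q > 0\<close> by (simp add: c_def powr_powr)
  then have "\<mu> * c powr (- 2) = sg * \<tau>0 * c powr (q - 2)"
    using assms(4,5) by (auto simp: sg_def abs_if powr_diff powr_minus field_simps)
  then have "gen_sff (g_len l) (\<lambda>s. \<mu> *\<^sub>R sigma_bl b l s) \<tau>0 (\<lambda>s. c) = slice_sff a lb t0"
    using gen_sff_const_eq_slice_sff[OF assms(5), of a lb c l sg b \<mu>] slice
    by (simp add: t0_def a_def q_def n_def)
  moreover have "gen_metric (g_len l) (\<lambda>s. c) = slice_metric a lb t0"
    using slice by (simp add: fun_eq_iff gen_metric_def q_def n_def)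
  moreover have "kasner_exponents a"
    unfolding a_def n_def by (rule kasner_exponents_offset[OF assms(3)]) (simp add: sg_def)
  ultimately show ?thesis
    unfolding Let_def n_def[symmetric] q_def[symmetric] t0_def[symmetric] sg_def[symmetric]
      c_def[symmetric] lb_def[unfolded a_def, symmetric] a_def[symmetric]
    using lich slice slice_metric_sgn[OF \<open>t0 \<noteq> 0\<close>] \<open>c > 0\<close> assms(2,5) by (auto simp: t0_def)
qed

end
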